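(* Let $R\in\mathrm{SO}(3)$ and let $q_s',q_s''\in\mathbb R^3$ for $s\in\{i,j,k\}$. Let $G_{ijk}$ be the $3\times3$ matrix whose rows are $(Rq_i'\times q_i'')^\top$, $(Rq_j'\times q_j'')^\top$, $(Rq_k'\times q_k'')^\top$, and let $M_{ijk}$ be the $6\times 6$ matrix $$M_{ijk}=\begin{bmatrix} q_i'' & -Rq_i' & -q_j'' & Rq_j' & 0 & 0\\ q_i'' & -Rq_i' & 0 & 0 & -q_k'' & Rq_k'\end{bmatrix}$$ (each entry a $3\times1$ block), which is the coefficient matrix of the linear system in $(\lambda_i,\mu_i,\lambda_j,\mu_j,\lambda_k,\mu_k)$ obtained from the equations $\lambda_s q_s''=\mu_s Rq_s'+t$ ($s=i,j,k$) by subtracting the $j$-th and $k$-th equations from the $i$-th. Then $\det G_{ijk}=\pm\det M_{ijk}$.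
   Context: $q_s'$ and $q_s''$ are the (homogeneous) image coordinates of the $s$-th point correspondence in the first and second calibrated camera, and $R$ is the relative rotation. The epipolar constraint $q_s''^\top[t]_\times R q_s'=0$ is linear in $t$ and can be written as $(Rq_s'\times q_s'')^\top t=0$ up to sign; $G_{ijk}$ collects these rows for three correspondences. Here $[a]_\times$ denotes the skew-symmetric matrix with $[a]_\times b=a\times b$. *)

theory Defs
  imports "HOL-Analysis.Analysis" "Jordan_Normal_Form.Determinant"
begin

definition coords3 :: "real^3 \<Rightarrow> real list" where
  "coords3 v = [v $ 1, v $ 2, v $ 3]"

definition stack6 :: "real^3 \<Rightarrow> real^3 \<Rightarrow> real Matrix.vec" where
  "stack6 a b = vec_of_list (coords3 a @ coords3 b)"

definition SO3 :: "(real^3^3) set" where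
  "SO3 = {R. orthogonal_matrix R \<and> Determinants.det R = 1}"

definition G_mat :: "real^3^3 \<Rightarrow> real^3 \<Rightarrow> real^3 \<Rightarrow> real^3 \<Rightarrow> real^3 \<Rightarrow> real^3 \<Rightarrow> real^3 \<Rightarrow> real^3^3" where
  "G_mat R qi' qi'' qj' qj'' qk' qk'' =
     vector [cross3 (R *v qi') qi'', cross3 (R *v qj') qj'', cross3 (R *v qk') qk'']"

definition M_mat :: "real^3^3 \<Rightarrow> real^3 \<Rightarrow> real^3 \<Rightarrow> real^3 \<Rightarrow> real^3 \<Rightarrow> real^3 \<Rightarrow> real^3 \<Rightarrow> real Matrix.mat" where
  "M_mat R qi' qi'' qj' qj'' qk' qk'' =
     mat_of_cols 6
       [stack6 qi'' qi'',
        stack6 (- (R *v qi')) (- (R *v qi')),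
        stack6 (- qj'') 0,
        stack6 (R *v qj') 0,
        stack6 0 (- qk''),
        stack6 0 (R *v qk')]"

end

theory Submission imports Defs begin

text \<open>
  Both sides are polynomials in the coordinates, and in fact \<open>det M\<^sub>i\<^sub>j\<^sub>k = det G\<^sub>i\<^sub>j\<^sub>k\<close> for an
  arbitrary matrix \<open>R\<close>. Writing the columns of \<open>M\<^sub>i\<^sub>j\<^sub>k\<close> as
  \<open>(a;a), (b;b), (c;0), (d;0), (0;e), (0;f)\<close>, cofactor expansion along the four columns padded
  with zeros leaves only \<open>2\<times>2\<close> minors, and the resulting polynomial is the triple product
  \<open>det [a\<times>b; c\<times>d; e\<times>f]\<close>. With \<open>a = q\<^sub>i'', b = -Rq\<^sub>i'\<close> (and similarly for \<open>j, k\<close>)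
  the rows \<open>a\<times>b = Rq\<^sub>i'\<times>q\<^sub>i''\<close> are exactly those of \<open>G\<^sub>i\<^sub>j\<^sub>k\<close>.
\<close>

definition remove_nth :: "nat \<Rightarrow> 'a list \<Rightarrow> 'a list" where
  "remove_nth k xs = take k xs @ drop (Suc k) xs"

lemma length_remove_nth: "k < length xs \<Longrightarrow> length (remove_nth k xs) = length xs - 1"
  unfolding remove_nth_def by auto

lemma nth_remove_nth:
  "k < length xs \<Longrightarrow> i < length xs - 1 \<Longrightarrow> remove_nth k xs ! i = xs ! (if i < k then i else Suc i)"
  unfolding remove_nth_def by (auto simp: nth_append min_def)

lemma mat_of_cols_map_vec_of_list: "mat_of_cols n (map vec_of_list cs) = mat_of_cols_list n cs"
  by (rule eq_matI) (auto simp: mat_of_cols_def mat_of_cols_list_def vec_of_list_index)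

lemma mat_delete_mat_of_cols_list:
  assumes i: "i < m" and j: "j < length cs" and cols: "\<forall>c\<in>set cs. length c = m"
  shows "mat_delete (mat_of_cols_list m cs) i j
           = mat_of_cols_list (m - 1) (map (remove_nth i) (remove_nth j cs))"
proof (rule eq_matI)
  fix a b
  assume "a < dim_row (mat_of_cols_list (m - 1) (map (remove_nth i) (remove_nth j cs)))"
    and "b < dim_col (mat_of_cols_list (m - 1) (map (remove_nth i) (remove_nth j cs)))"
  then have a: "a < m - 1" and b: "b < length cs - 1"
    using j by (auto simp: mat_of_cols_list_def length_remove_nth)
  let ?b' = "if b < j then b else Suc b"
  have col: "remove_nth j cs ! b = cs ! ?b'"
    using nth_remove_nth[OF j b] .
  have "length (cs ! ?b') = m"
    using cols b by (auto intro: nth_mem)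
  then show "mat_delete (mat_of_cols_list m cs) i j $$ (a, b)
    = mat_of_cols_list (m - 1) (map (remove_nth i) (remove_nth j cs)) $$ (a, b)"
    using a b i j col nth_remove_nth[of i "cs ! ?b'" a]
    by (auto simp: mat_delete_def mat_of_cols_list_def length_remove_nth)
qed (use j in \<open>auto simp: mat_delete_def mat_of_cols_list_def length_remove_nth\<close>)

lemma det_mat_of_cols_list_expand_column:
  fixes cs :: "'a::comm_ring_1 list list"
  assumes len: "length cs = Suc n" and cols: "\<forall>c\<in>set cs. length c = Suc n" and j: "j < Suc n"
  shows "Determinant.det (mat_of_cols_list (Suc n) cs)
    = (\<Sum>i<Suc n. (-1)^(i+j) * cs!j!i
          * Determinant.det (mat_of_cols_list n (map (remove_nth i) (remove_nth j cs))))"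
proof -
  let ?A = "mat_of_cols_list (Suc n) cs"
  have "?A \<in> carrier_mat (Suc n) (Suc n)"
    using len by (simp add: mat_of_cols_list_def)
  then have "Determinant.det ?A = (\<Sum>i<Suc n. ?A $$ (i,j) * cofactor ?A i j)"
    using j by (rule laplace_expansion_column)
  also have "\<dots> = (\<Sum>i<Suc n. (-1)^(i+j) * cs!j!i
          * Determinant.det (mat_of_cols_list n (map (remove_nth i) (remove_nth j cs))))"
  proof (rule sum.cong[OF refl])
    fix i assume "i \<in> {..<Suc n}"
    then show "?A $$ (i,j) * cofactor ?A i j
      = (-1)^(i+j) * cs!j!i
          * Determinant.det (mat_of_cols_list n (map (remove_nth i) (remove_nth j cs)))"
      using len cols j
      by (simp add: cofactor_def mat_delete_mat_of_cols_list)
         (simp add: mat_of_cols_list_def)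
  qed
  finally show ?thesis .
qed

lemma det_mat_of_cols_list_singleton: "Determinant.det (mat_of_cols_list (Suc 0) [[x]]) = x"
  using det_mat_of_cols_list_expand_column[of "[[x]]" 0 0]
  by (simp add: remove_nth_def mat_of_cols_list_def)

lemma det_mat_of_cols_list_2x2:
  "Determinant.det (mat_of_cols_list 2 [[a, b], [c, d]]) = a * d - b * c"
  using det_mat_of_cols_list_expand_column[of "[[a, b], [c, d]]" 1 0]
  by (simp add: numeral_2_eq_2 lessThan_Suc remove_nth_def det_mat_of_cols_list_singleton)

lemma det_mat_of_cols_stack6_eq_det_cross3:
  fixes a b c d e f :: "real^3"
  shows "Determinant.det (mat_of_cols 6
           [stack6 a a, stack6 b b, stack6 c 0, stack6 d 0, stack6 0 e, stack6 0 f])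
         = Determinants.det (vector [cross3 a b, cross3 c d, cross3 e f] :: real^3^3)"
proof -
  have "[stack6 a a, stack6 b b, stack6 c 0, stack6 d 0, stack6 0 e, stack6 0 f]
    = map vec_of_list [coords3 a @ coords3 a, coords3 b @ coords3 b, coords3 c @ [0,0,0],
                       coords3 d @ [0,0,0], [0,0,0] @ coords3 e, [0,0,0] @ coords3 f]"
    by (simp only: list.map stack6_def coords3_def zero_index)
  then have "Determinant.det (mat_of_cols 6
           [stack6 a a, stack6 b b, stack6 c 0, stack6 d 0, stack6 0 e, stack6 0 f])
    = Determinant.det (mat_of_cols_list 6
        [coords3 a @ coords3 a, coords3 b @ coords3 b, coords3 c @ [0,0,0],
         coords3 d @ [0,0,0], [0,0,0] @ coords3 e, [0,0,0] @ coords3 f])"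
    by (simp only: mat_of_cols_map_vec_of_list)
  also have "\<dots> = Determinants.det (vector [cross3 a b, cross3 c d, cross3 e f] :: real^3^3)"
    \<comment> \<open>column 2 of each successive minor is \<open>c\<close>, \<open>d\<close>, \<open>e\<close> or \<open>f\<close> padded with zeros\<close>
    by (simp add: coords3_def lessThan_nat_numeral remove_nth_def
        det_mat_of_cols_list_expand_column[where n=5 and j=2, simplified]
        det_mat_of_cols_list_expand_column[where n=4 and j=2, simplified]
        det_mat_of_cols_list_expand_column[where n=3 and j=2, simplified]
        det_mat_of_cols_list_expand_column[where n=2 and j=2, simplified]
        det_mat_of_cols_list_2x2 det_3 cross3_simps algebra_simps)
  finally show ?thesis .
qed

theorem theorem2:
  fixes R :: "real^3^3" and qi' qi'' qj' qj'' qk' qk'' :: "real^3"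
  assumes "R \<in> SO3"
  shows "Determinants.det (G_mat R qi' qi'' qj' qj'' qk' qk'')
           = Determinant.det (M_mat R qi' qi'' qj' qj'' qk' qk'')
       \<or> Determinants.det (G_mat R qi' qi'' qj' qj'' qk' qk'')
           = - Determinant.det (M_mat R qi' qi'' qj' qj'' qk' qk'')"
proof -
  have "Determinant.det (M_mat R qi' qi'' qj' qj'' qk' qk'')
      = Determinants.det (vector [cross3 qi'' (- (R *v qi')), cross3 (- qj'') (R *v qj'),
                                  cross3 (- qk'') (R *v qk')] :: real^3^3)"
    unfolding M_mat_def by (rule det_mat_of_cols_stack6_eq_det_cross3)
  also have "\<dots> = Determinants.det (G_mat R qi' qi'' qj' qj'' qk' qk'')"
    unfolding G_mat_def by (simp add: cross_skew[of _ "R *v _"])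
  finally show ?thesis by simp
qed

end
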